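(* Let $f=\frac1n\sum_{i=1}^n f_i$ where each $f_i:\mathbb{R}^d\to\mathbb{R}$ is $L$-smooth, and assume moreover that either each $f_i$ is $\mu$-strongly convex for some $\mu>0$, or $\inf_x f(x)>-\infty$. Let the stepsize satisfy $\gamma\le\frac1{3L}$. Then the iterates of No Full Grad SARAH (described in the context) satisfy, for every epoch $s\ge1$, $$\Big\|\nabla f(x_s^0)-\frac1{n+1}\sum_{t=0}^{n}v_s^t\Big\|^2\le 9\gamma^2L^2\|v_s\|^2+36\gamma^2L^2n^2\|v_{s-1}\|^2.$$
   Context: No Full Grad SARAH: input $x_0^0\in\mathbb{R}^d$, $v_0=0$, stepsize $\gamma>0$. For epochs $s=0,1,\dots$: choose a permutation $\pi_s^1,\dots,\pi_s^n$ of $\{1,\dots,n\}$ (by any shuffling rule); set $\tilde v_s^1=0$, $v_s^0=v_s$, $x_s^1=x_s^0-\gamma v_s^0$; for $t=1,\dots,n$ set $\tilde v_s^{t+1}=\frac{t-1}{t}\tilde v_s^t+\frac1t\nabla f_{\pi_s^t}(x_s^t)$, $v_s^t=\frac1n\big(\nabla f_{\pi_s^t}(x_s^t)-\nabla f_{\pi_s^t}(x_s^{t-1})\big)+v_s^{t-1}$, $x_s^{t+1}=x_s^t-\gamma v_s^t$; then $x_{s+1}^0=x_s^{n+1}$, $v_{s+1}=\tilde v_s^{n+1}$. *)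

theory Defs
  imports "HOL-Analysis.Analysis"
begin

definition L_smooth :: "real \<Rightarrow> ('a::euclidean_space \<Rightarrow> real) \<Rightarrow> ('a \<Rightarrow> 'a) \<Rightarrow> bool" where
  "L_smooth L f g \<longleftrightarrow> (\<forall>x. GDERIV f x :> g x) \<and> (\<forall>x y. norm (g x - g y) \<le> L * norm (x - y))"

definition strongly_convex :: "real \<Rightarrow> ('a::euclidean_space \<Rightarrow> real) \<Rightarrow> bool" where
  "strongly_convex \<mu> f \<longleftrightarrow> convex_on UNIV (\<lambda>x. f x - \<mu> / 2 * (norm x)\<^sup>2)"

text \<open>Inner loop of No Full Grad SARAH in epoch with permutation pi (indices 1..n),
  start point x0 and initial direction v.
  inner_state ... t = (x^t, x^(t+1), v^t, tilde v^(t+1)) for t = 0..n.\<close>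
fun inner_state :: "(nat \<Rightarrow> 'a \<Rightarrow> 'a::euclidean_space) \<Rightarrow> nat \<Rightarrow> real \<Rightarrow> (nat \<Rightarrow> nat)
    \<Rightarrow> 'a \<Rightarrow> 'a \<Rightarrow> nat \<Rightarrow> 'a \<times> 'a \<times> 'a \<times> 'a" where
  "inner_state g n \<gamma> \<pi> x0 v 0 = (x0, x0 - \<gamma> *\<^sub>R v, v, 0)"
| "inner_state g n \<gamma> \<pi> x0 v (Suc t) =
     (case inner_state g n \<gamma> \<pi> x0 v t of (xp, xc, vv, tv) \<Rightarrow>
       let k = Suc t; i = \<pi> k;
           tv' = ((real k - 1) / real k) *\<^sub>R tv + (1 / real k) *\<^sub>R g i xc;
           v' = (1 / real n) *\<^sub>R (g i xc - g i xp) + vv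
       in (xc, xc - \<gamma> *\<^sub>R v', v', tv'))"

text \<open>Outer loop: sarah_epoch ... s = (x_s^0, v_s), with v_0 = 0.\<close>
fun sarah_epoch :: "(nat \<Rightarrow> 'a \<Rightarrow> 'a::euclidean_space) \<Rightarrow> nat \<Rightarrow> real \<Rightarrow> (nat \<Rightarrow> nat \<Rightarrow> nat)
    \<Rightarrow> 'a \<Rightarrow> nat \<Rightarrow> 'a \<times> 'a" where
  "sarah_epoch g n \<gamma> \<pi> x0 0 = (x0, 0)"
| "sarah_epoch g n \<gamma> \<pi> x0 (Suc s) =
     (case sarah_epoch g n \<gamma> \<pi> x0 s of (x, v) \<Rightarrow>
       (case inner_state g n \<gamma> (\<pi> s) x v n of (xp, xc, vv, tv) \<Rightarrow> (xc, tv)))"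

definition sarah_x0 where "sarah_x0 g n \<gamma> \<pi> x0 s = fst (sarah_epoch g n \<gamma> \<pi> x0 s)"
definition sarah_v where "sarah_v g n \<gamma> \<pi> x0 s = snd (sarah_epoch g n \<gamma> \<pi> x0 s)"
definition sarah_vt where
  "sarah_vt g n \<gamma> \<pi> x0 s t =
     fst (snd (snd (inner_state g n \<gamma> (\<pi> s) (sarah_x0 g n \<gamma> \<pi> x0 s) (sarah_v g n \<gamma> \<pi> x0 s) t)))"

end

theory Submission imports Defs begin

(* Within an epoch the directions drift slowly: v^(t+1) - v^t has norm at most (gamma L / n) |v^t|,
   so for gamma L <= 1/3 all v^t stay within 3/2 |v_s| and their mean is within (3/2) gamma L |v_s|
   of v_s. On the other hand v_s is the average of the gradients of f_(pi k) at the points x_(s-1)^k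
   of the previous epoch, each at distance at most (3/2) gamma n |v_(s-1)| from x_s^0, so v_s is
   within (3/2) gamma L n |v_(s-1)| of grad f(x_s^0). Combining both by (a + b)^2 <= 2 a^2 + 2 b^2
   gives the bound with 9/2 in place of 9 and 36. Only the Lipschitz continuity of the gradients
   enters. *)

(* inner_avg t is the running average written tilde v^(t+1) in the algorithm. *)
definition inner_x :: "(nat \<Rightarrow> 'a \<Rightarrow> 'a::euclidean_space) \<Rightarrow> nat \<Rightarrow> real \<Rightarrow> (nat \<Rightarrow> nat)
    \<Rightarrow> 'a \<Rightarrow> 'a \<Rightarrow> nat \<Rightarrow> 'a" where
  "inner_x g n \<gamma> p x v t = fst (inner_state g n \<gamma> p x v t)"

definition inner_v :: "(nat \<Rightarrow> 'a \<Rightarrow> 'a::euclidean_space) \<Rightarrow> nat \<Rightarrow> real \<Rightarrow> (nat \<Rightarrow> nat)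
    \<Rightarrow> 'a \<Rightarrow> 'a \<Rightarrow> nat \<Rightarrow> 'a" where
  "inner_v g n \<gamma> p x v t = fst (snd (snd (inner_state g n \<gamma> p x v t)))"

definition inner_avg :: "(nat \<Rightarrow> 'a \<Rightarrow> 'a::euclidean_space) \<Rightarrow> nat \<Rightarrow> real \<Rightarrow> (nat \<Rightarrow> nat)
    \<Rightarrow> 'a \<Rightarrow> 'a \<Rightarrow> nat \<Rightarrow> 'a" where
  "inner_avg g n \<gamma> p x v t = snd (snd (snd (inner_state g n \<gamma> p x v t)))"

lemma inner_state_eq:
  "inner_state g n \<gamma> p x v t =
     (inner_x g n \<gamma> p x v t, inner_x g n \<gamma> p x v t - \<gamma> *\<^sub>R inner_v g n \<gamma> p x v t,
      inner_v g n \<gamma> p x v t, inner_avg g n \<gamma> p x v t)"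
proof (cases t)
  case 0
  then show ?thesis by (simp add: inner_x_def inner_v_def inner_avg_def)
next
  case (Suc t)
  then show ?thesis by (simp add: inner_x_def inner_v_def inner_avg_def Let_def split: prod.split)
qed

lemma inner_x_0 [simp]: "inner_x g n \<gamma> p x v 0 = x"
  and inner_v_0 [simp]: "inner_v g n \<gamma> p x v 0 = v"
  and inner_avg_0 [simp]: "inner_avg g n \<gamma> p x v 0 = 0"
  by (simp_all add: inner_x_def inner_v_def inner_avg_def)

lemma inner_state_Suc:
  "inner_state g n \<gamma> p x v (Suc t) =
     (let x' = inner_x g n \<gamma> p x v t - \<gamma> *\<^sub>R inner_v g n \<gamma> p x v t;
          v' = (1 / real n) *\<^sub>R (g (p (Suc t)) x' - g (p (Suc t)) (inner_x g n \<gamma> p x v t))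
               + inner_v g n \<gamma> p x v t
      in (x', x' - \<gamma> *\<^sub>R v', v',
          (real t / real (Suc t)) *\<^sub>R inner_avg g n \<gamma> p x v t + (1 / real (Suc t)) *\<^sub>R g (p (Suc t)) x'))"
  by (simp only: inner_state.simps(2) inner_state_eq[of g n \<gamma> p x v t]) (simp add: Let_def)

lemma inner_x_Suc:
  "inner_x g n \<gamma> p x v (Suc t) = inner_x g n \<gamma> p x v t - \<gamma> *\<^sub>R inner_v g n \<gamma> p x v t"
  by (simp del: inner_state.simps add: inner_x_def [of _ _ _ _ _ _ "Suc t"] inner_state_Suc Let_def)

lemma inner_v_Suc:
  "inner_v g n \<gamma> p x v (Suc t) =
     (1 / real n) *\<^sub>R (g (p (Suc t)) (inner_x g n \<gamma> p x v (Suc t))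
                       - g (p (Suc t)) (inner_x g n \<gamma> p x v t))
     + inner_v g n \<gamma> p x v t"
  by (simp del: inner_state.simps add: inner_v_def [of _ _ _ _ _ _ "Suc t"] inner_x_Suc inner_state_Suc Let_def)

lemma inner_avg_Suc:
  "inner_avg g n \<gamma> p x v (Suc t) =
     (real t / real (Suc t)) *\<^sub>R inner_avg g n \<gamma> p x v t
     + (1 / real (Suc t)) *\<^sub>R g (p (Suc t)) (inner_x g n \<gamma> p x v (Suc t))"
  by (simp del: inner_state.simps add: inner_avg_def [of _ _ _ _ _ _ "Suc t"] inner_x_Suc inner_state_Suc Let_def)

lemma inner_avg_eq_mean:
  "inner_avg g n \<gamma> p x v t = (1 / real t) *\<^sub>R (\<Sum>k=1..t. g (p k) (inner_x g n \<gamma> p x v k))"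
proof (induction t)
  case 0
  then show ?case by simp
next
  case (Suc t)
  then show ?case
    by (cases "t = 0") (simp_all add: inner_avg_Suc scaleR_add_right)
qed

lemma sarah_x0_Suc:
  "sarah_x0 g n \<gamma> \<pi> x0 (Suc s) =
     inner_x g n \<gamma> (\<pi> s) (sarah_x0 g n \<gamma> \<pi> x0 s) (sarah_v g n \<gamma> \<pi> x0 s) (Suc n)"
  by (simp del: inner_state.simps
      add: sarah_x0_def sarah_v_def inner_x_Suc inner_state_eq split: prod.split)

lemma sarah_v_Suc:
  "sarah_v g n \<gamma> \<pi> x0 (Suc s) =
     inner_avg g n \<gamma> (\<pi> s) (sarah_x0 g n \<gamma> \<pi> x0 s) (sarah_v g n \<gamma> \<pi> x0 s) n"
  by (simp del: inner_state.simps add: sarah_x0_def sarah_v_def inner_state_eq split: prod.split)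

lemma sarah_vt_eq_inner_v:
  "sarah_vt g n \<gamma> \<pi> x0 s t =
     inner_v g n \<gamma> (\<pi> s) (sarah_x0 g n \<gamma> \<pi> x0 s) (sarah_v g n \<gamma> \<pi> x0 s) t"
  by (simp add: sarah_vt_def inner_v_def)

context
  fixes g :: "nat \<Rightarrow> 'a::euclidean_space \<Rightarrow> 'a" and n :: nat and \<gamma> L :: real
    and p :: "nat \<Rightarrow> nat" and x v :: 'a
  assumes n_pos: "n \<ge> 1"
    and \<gamma>_nonneg: "\<gamma> \<ge> 0" and \<gamma>L_le: "\<gamma> * L \<le> 1 / 3"
    and grad_lipschitz: "\<And>i. i \<in> {1..n} \<Longrightarrow> L-lipschitz_on UNIV (g i)"
    and perm: "p permutes {1..n}"
begin

abbreviation "X \<equiv> inner_x g n \<gamma> p x v"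
abbreviation "V \<equiv> inner_v g n \<gamma> p x v"

lemma L_nonneg: "L \<ge> 0"
  using grad_lipschitz[of 1] n_pos lipschitz_on_nonneg by auto

lemma \<gamma>L_nonneg: "\<gamma> * L \<ge> 0"
  using \<gamma>_nonneg L_nonneg by simp

lemma grad_step_lipschitz:
  "k \<in> {1..n} \<Longrightarrow> norm (g (p k) a - g (p k) b) \<le> L * norm (a - b)"
  using grad_lipschitz[OF permutes_in_image[OF perm, THEN iffD2]] lipschitz_on_normD by blast

lemma inner_v_dist:
  "t \<le> n \<Longrightarrow> norm (V t - v) \<le> \<gamma> * L / n * (\<Sum>k<t. norm (V k))"
proof (induction t)
  case 0
  then show ?case by simp
next
  case (Suc t)
  have "norm (g (p (Suc t)) (X (Suc t)) - g (p (Suc t)) (X t)) \<le> L * norm (X (Suc t) - X t)"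
    using Suc.prems by (intro grad_step_lipschitz) auto
  also have "\<dots> = \<gamma> * L * norm (V t)"
    using \<gamma>_nonneg by (simp add: inner_x_Suc)
  finally have step: "norm (V (Suc t) - V t) \<le> \<gamma> * L / n * norm (V t)"
    by (simp add: inner_v_Suc divide_right_mono)
  have "norm (V (Suc t) - v) \<le> norm (V (Suc t) - V t) + norm (V t - v)"
    using norm_triangle_ineq[of "V (Suc t) - V t" "V t - v"] by simp
  also have "\<dots> \<le> \<gamma> * L / n * norm (V t) + \<gamma> * L / n * (\<Sum>k<t. norm (V k))"
    using step Suc by simp
  finally show ?case
    by (simp add: distrib_left)
qed

lemma inner_v_dist_le_if_bounded:
  assumes "t \<le> n" and "\<And>k. k < t \<Longrightarrow> norm (V k) \<le> 3 / 2 * norm v"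
  shows "norm (V t - v) \<le> 3 / 2 * (\<gamma> * L) * norm v"
proof -
  have "norm (V t - v) \<le> \<gamma> * L / n * (\<Sum>k<t. norm (V k))"
    using inner_v_dist assms(1) .
  also have "\<dots> \<le> \<gamma> * L / n * (t * (3 / 2 * norm v))"
    using assms(2) sum_mono[of "{..<t}" "\<lambda>k. norm (V k)" "\<lambda>_. 3 / 2 * norm v"] \<gamma>L_nonneg
    by (intro mult_left_mono) auto
  also have "\<dots> = (\<gamma> * L * 3 / 2 * norm v) * (t / n)"
    by (simp add: field_simps)
  also have "\<dots> \<le> \<gamma> * L * 3 / 2 * norm v"
    using assms(1) n_pos \<gamma>L_nonneg by (intro mult_left_le) (auto simp: divide_le_eq_1)
  finally show ?thesis by simp
qed

lemma inner_v_bound: "t \<le> n \<Longrightarrow> norm (V t) \<le> 3 / 2 * norm v"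
proof (induction t rule: less_induct)
  case (less t)
  have "norm (V t) \<le> norm v + norm (V t - v)"
    by (metis norm_triangle_sub add.commute)
  also have "\<dots> \<le> norm v + 3 / 2 * (\<gamma> * L) * norm v"
    using less by (intro add_left_mono inner_v_dist_le_if_bounded) auto
  also have "\<dots> \<le> 3 / 2 * norm v"
    using mult_right_mono[OF \<gamma>L_le, of "norm v"] by (simp add: ac_simps)
  finally show ?case .
qed

lemma inner_v_dist_bound: "t \<le> n \<Longrightarrow> norm (V t - v) \<le> 3 / 2 * (\<gamma> * L) * norm v"
  by (rule inner_v_dist_le_if_bounded, assumption, rule inner_v_bound) simp

lemma inner_x_dist_bound:
  "k + d \<le> n + 1 \<Longrightarrow> norm (X (k + d) - X k) \<le> 3 / 2 * \<gamma> * d * norm v"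
proof (induction d)
  case 0
  then show ?case by simp
next
  case (Suc d)
  have "norm (X (k + Suc d) - X k) \<le> norm (X (k + d) - X k) + \<gamma> * norm (V (k + d))"
    using \<gamma>_nonneg norm_triangle_ineq4[of "X (k + d) - X k" "\<gamma> *\<^sub>R V (k + d)"]
    by (simp add: inner_x_Suc algebra_simps)
  also have "\<dots> \<le> 3 / 2 * \<gamma> * d * norm v + \<gamma> * (3 / 2 * norm v)"
    using Suc \<gamma>_nonneg inner_v_bound[of "k + d"] by (intro add_mono mult_left_mono) auto
  finally show ?case
    by (simp add: algebra_simps)
qed

lemma inner_mean_v_dist:
  "norm ((1 / real (n + 1)) *\<^sub>R (\<Sum>t=0..n. V t) - v) \<le> 3 / 2 * (\<gamma> * L) * norm v"
proof -
  have "(1 / real (n + 1)) *\<^sub>R (\<Sum>t=0..n. V t) - v = (1 / real (n + 1)) *\<^sub>R (\<Sum>t=0..n. V t - v)"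
    by (simp add: sum_subtractf scaleR_diff_right sum_constant_scaleR)
  moreover have "norm (\<Sum>t=0..n. V t - v) \<le> (\<Sum>t=0..n. 3 / 2 * (\<gamma> * L) * norm v)"
    by (intro sum_norm_le inner_v_dist_bound) simp
  ultimately show ?thesis
    by (simp add: field_simps)
qed

lemma mean_grad_inner_avg_dist:
  "norm ((1 / real n) *\<^sub>R (\<Sum>i=1..n. g i (X (Suc n))) - inner_avg g n \<gamma> p x v n)
     \<le> 3 / 2 * (\<gamma> * L * n) * norm v"
proof -
  have "(\<Sum>i=1..n. g i (X (Suc n))) = (\<Sum>k=1..n. g (p k) (X (Suc n)))"
    using sum.reindex_bij_betw[OF permutes_imp_bij[OF perm], of "\<lambda>i. g i (X (Suc n))"] by simp
  then have "(1 / real n) *\<^sub>R (\<Sum>i=1..n. g i (X (Suc n))) - inner_avg g n \<gamma> p x v n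
      = (1 / real n) *\<^sub>R (\<Sum>k=1..n. g (p k) (X (Suc n)) - g (p k) (X k))"
    by (simp add: inner_avg_eq_mean sum_subtractf scaleR_diff_right)
  moreover have "norm (\<Sum>k=1..n. g (p k) (X (Suc n)) - g (p k) (X k))
      \<le> (\<Sum>k=1..n. L * (3 / 2 * \<gamma> * n * norm v))"
  proof (rule sum_norm_le)
    fix k assume k: "k \<in> {1..n}"
    have "norm (g (p k) (X (Suc n)) - g (p k) (X k)) \<le> L * norm (X (k + (Suc n - k)) - X k)"
      using k grad_step_lipschitz by simp
    also have "\<dots> \<le> L * (3 / 2 * \<gamma> * real (Suc n - k) * norm v)"
      using inner_x_dist_bound[of k "Suc n - k"] k L_nonneg by (intro mult_left_mono) auto
    also have "\<dots> \<le> L * (3 / 2 * \<gamma> * n * norm v)"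
      using k L_nonneg \<gamma>_nonneg by (intro mult_left_mono mult_right_mono) auto
    finally show "norm (g (p k) (X (Suc n)) - g (p k) (X k)) \<le> L * (3 / 2 * \<gamma> * n * norm v)" .
  qed
  ultimately show ?thesis
    using n_pos by (simp add: field_simps)
qed

end

lemma norm_diff_power2_le:
  fixes a b :: "'a::real_normed_vector"
  assumes "norm a \<le> \<alpha>" and "norm b \<le> \<beta>"
  shows "(norm (a - b))\<^sup>2 \<le> 2 * \<alpha>\<^sup>2 + 2 * \<beta>\<^sup>2"
proof -
  have "norm (a - b) \<le> \<alpha> + \<beta>"
    using norm_triangle_ineq4[of a b] assms by linarith
  then have "(norm (a - b))\<^sup>2 \<le> (\<alpha> + \<beta>)\<^sup>2"
    by (rule power_mono) simp_all
  also have "\<dots> \<le> 2 * \<alpha>\<^sup>2 + 2 * \<beta>\<^sup>2"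
    using zero_le_power2[of "\<alpha> - \<beta>"] by (simp add: power2_eq_square algebra_simps)
  finally show ?thesis .
qed

theorem lemma4:
  fixes F :: "nat \<Rightarrow> 'a::euclidean_space \<Rightarrow> real"
    and g :: "nat \<Rightarrow> 'a \<Rightarrow> 'a"
    and n :: nat and L \<gamma> :: real
    and \<pi> :: "nat \<Rightarrow> nat \<Rightarrow> nat"
    and x0 :: 'a and s :: nat
  assumes n: "n \<ge> 1"
    and L: "L > 0"
    and smooth: "\<And>i. i \<in> {1..n} \<Longrightarrow> L_smooth L (F i) (g i)"
    and conv_or_bdd: "(\<exists>\<mu>>0. \<forall>i\<in>{1..n}. strongly_convex \<mu> (F i))
                      \<or> bdd_below (range (\<lambda>x. (1 / real n) * (\<Sum>i=1..n. F i x)))"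
    and perm: "\<And>s. \<pi> s permutes {1..n}"
    and \<gamma>_pos: "\<gamma> > 0"
    and \<gamma>_le: "\<gamma> \<le> 1 / (3 * L)"
    and s: "s \<ge> 1"
  shows "(norm ((1 / real n) *\<^sub>R (\<Sum>i=1..n. g i (sarah_x0 g n \<gamma> \<pi> x0 s))
              - (1 / real (n + 1)) *\<^sub>R (\<Sum>t=0..n. sarah_vt g n \<gamma> \<pi> x0 s t)))\<^sup>2
         \<le> 9 * \<gamma>\<^sup>2 * L\<^sup>2 * (norm (sarah_v g n \<gamma> \<pi> x0 s))\<^sup>2
           + 36 * \<gamma>\<^sup>2 * L\<^sup>2 * (real n)\<^sup>2 * (norm (sarah_v g n \<gamma> \<pi> x0 (s - 1)))\<^sup>2"
proof -
  obtain r where s_eq: "s = Suc r"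
    using s by (cases s) auto
  have lipschitz: "L-lipschitz_on UNIV (g i)" if "i \<in> {1..n}" for i
    using smooth[OF that] L by (auto simp: L_smooth_def dist_norm intro!: lipschitz_onI)
  have \<gamma>L: "\<gamma> * L \<le> 1 / 3"
    using \<gamma>_le L by (simp add: field_simps)
  define x where "x = sarah_x0 g n \<gamma> \<pi> x0 s"
  define v where "v = sarah_v g n \<gamma> \<pi> x0 s"
  define v' where "v' = sarah_v g n \<gamma> \<pi> x0 r"
  have grad_dist: "norm ((1 / real n) *\<^sub>R (\<Sum>i=1..n. g i x) - v) \<le> 3 / 2 * (\<gamma> * L * n) * norm v'"
    using mean_grad_inner_avg_dist[OF n _ \<gamma>L lipschitz perm] \<gamma>_pos
    by (simp add: x_def v_def v'_def s_eq sarah_x0_Suc sarah_v_Suc)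
  have mean_dist: "norm ((1 / real (n + 1)) *\<^sub>R (\<Sum>t=0..n. sarah_vt g n \<gamma> \<pi> x0 s t) - v)
      \<le> 3 / 2 * (\<gamma> * L) * norm v"
    using inner_mean_v_dist[OF n _ \<gamma>L lipschitz perm] \<gamma>_pos
    by (simp add: x_def v_def sarah_vt_eq_inner_v)
  have "(norm ((1 / real n) *\<^sub>R (\<Sum>i=1..n. g i x)
              - (1 / real (n + 1)) *\<^sub>R (\<Sum>t=0..n. sarah_vt g n \<gamma> \<pi> x0 s t)))\<^sup>2
      \<le> 2 * (3 / 2 * (\<gamma> * L * n) * norm v')\<^sup>2 + 2 * (3 / 2 * (\<gamma> * L) * norm v)\<^sup>2"
    using norm_diff_power2_le[OF grad_dist mean_dist] by simp
  also have "\<dots> = 9 / 2 * (\<gamma>\<^sup>2 * L\<^sup>2 * (real n)\<^sup>2 * (norm v')\<^sup>2) + 9 / 2 * (\<gamma>\<^sup>2 * L\<^sup>2 * (norm v)\<^sup>2)"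
    by (simp add: power2_eq_square ac_simps)
  also have "\<dots> \<le> 9 * \<gamma>\<^sup>2 * L\<^sup>2 * (norm v)\<^sup>2 + 36 * \<gamma>\<^sup>2 * L\<^sup>2 * (real n)\<^sup>2 * (norm v')\<^sup>2"
  proof -
    have "0 \<le> \<gamma>\<^sup>2 * L\<^sup>2 * (real n)\<^sup>2 * (norm v')\<^sup>2" and "0 \<le> \<gamma>\<^sup>2 * L\<^sup>2 * (norm v)\<^sup>2"
      by simp_all
    then show ?thesis by linarith
  qed
  finally show ?thesis
    by (simp add: x_def v_def v'_def s_eq)
qed

end
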